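(* Let $f:\mathbb{R}^n\times\mathbb{R}_+\to\mathbb{R}$ be thrice continuously differentiable with $\nabla_{\mathbf{x}\mathbf{x}} f(\mathbf{x},t)\succeq m\mathbf{I}_n$ for some $m>0$ and all $(\mathbf{x},t)$, and suppose that for all $\mathbf{x},t$ and $i\in\{1,\dots,n\}$: $\|\nabla_{\mathbf{x}\mathbf{x}} f\|_2\le C_{xx}$, $\|\nabla_{\mathbf{x}t} f\|_2\le C_{xt}$, $\|\nabla_{\mathbf{x}\mathbf{x}t} f\|_2\le C_{xxt}$, $\|\nabla_{\mathbf{x}tt} f\|_2\le C_{xtt}$, $\|\nabla_{\mathbf{x}\mathbf{x}\mathbf{x}_i} f\|_2\le C_{xxx}$ for given positive constants. Fix $\alpha>0$, $\epsilon>0$, $t_0=0$ and $\mathbf{x}_0\in\mathbb{R}^n$. The self-triggered algorithm generates $\{t_k\}$, $\{\mathbf{x}_k\}$ recursively: compute $\dot{\mathbf{x}}_k=-\nabla_{\mathbf{x}\mathbf{x}}^{-1} f(\mathbf{x}_k,t_k)[\alpha\nabla_{\mathbf{x}} f(\mathbf{x}_k,t_k)+\nabla_{\mathbf{x}t} f(\mathbf{x}_k,t_k)]$, set $\mathbf{x}(t)=\mathbf{x}_k+\dot{\mathbf{x}}_k(t-t_k)$ for $t\in[t_k,t_{k+1}]$ and $V(t)=\tfrac12\|\nabla_{\mathbf{x}} f(\mathbf{x}(t),t)\|_2^2$; if $V(t_k)\ge\epsilon$ (equivalently $\|\nabla_{\mathbf{x}} f(\mathbf{x}_k,t_k)\|_2\ge\sqrt{2\epsilon}$),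 let $t_{k+1}$ be the smallest $t>t_k$ with $\phi_k(t)=0$; otherwise let $t_{k+1}$ be the smallest $t>t_k$ with $\psi_k(t)=\epsilon$, where $\psi_k(t)=V(t_k)+\int_{t_k}^t\phi_k(\sigma)\,d\sigma$; then set $\mathbf{x}_{k+1}=\mathbf{x}_k+\dot{\mathbf{x}}_k(t_{k+1}-t_k)$. Here $\phi_k$ is either (for all $k$) $$\phi_k(t)=\tfrac12 a_kb_k(t-t_k)^2+\big(a_k^2+b_k\sqrt{2V(t_k)}\big)(t-t_k)-2\alpha V(t_k)$$ or (for all $k$) $$\phi_k(t)=\tfrac12 b_k^2(t-t_k)^3+\tfrac32\alpha\sqrt{2V(t_k)}\,b_k(t-t_k)^2+\big(\sqrt{2V(t_k)}\,b_k+2\alpha^2V(t_k)\big)(t-t_k)-2\alpha V(t_k),$$ with $a_k=C_{xx}\|\dot{\mathbf{x}}_k\|_2+C_{xt}$ and $b_k=(C_{xxx}\|\dot{\mathbf{x}}_k\|_1+2C_{xxt})\|\dot{\mathbf{x}}_k\|_2+C_{xtt}$. Then there exists $m'\in\mathbb{Z}_+$ such that (i) $V(t)\le\epsilon$ for all $t\ge t_{m'}$; and (ii) there is $\tau(\epsilon)>0$ with $t_{k+1}-t_k>\tau(\epsilon)$ for all $k\in\mathbb{Z}_+$.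
   Context: $\nabla_{\mathbf{x}} f$ is the gradient in $\mathbf{x}$, $\nabla_{\mathbf{x}\mathbf{x}} f$ the Hessian in $\mathbf{x}$, $\nabla_{\mathbf{x}t} f=\frac{\partial}{\partial t}\nabla_{\mathbf{x}} f$, $\nabla_{\mathbf{x}\mathbf{x}t} f=\frac{\partial}{\partial t}\nabla_{\mathbf{x}\mathbf{x}} f$, $\nabla_{\mathbf{x}tt} f=\frac{\partial^2}{\partial t^2}\nabla_{\mathbf{x}} f$, $\nabla_{\mathbf{x}\mathbf{x}\mathbf{x}_i} f=\frac{\partial}{\partial \mathbf{x}_i}\nabla_{\mathbf{x}\mathbf{x}} f$. Matrix norms are spectral norms; $\|\cdot\|_1$ is the vector one-norm. The algorithm is run indefinitely (no final time). *)

theory Defs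
  imports "HOL-Analysis.Analysis"
begin

definition C3_on :: "('a::real_normed_vector \<Rightarrow> real) \<Rightarrow> 'a set \<Rightarrow> bool" where
  "C3_on F S \<longleftrightarrow>
     (\<exists>(D1 :: 'a \<Rightarrow> ('a \<Rightarrow>\<^sub>L real))
        (D2 :: 'a \<Rightarrow> ('a \<Rightarrow>\<^sub>L ('a \<Rightarrow>\<^sub>L real)))
        (D3 :: 'a \<Rightarrow> ('a \<Rightarrow>\<^sub>L ('a \<Rightarrow>\<^sub>L ('a \<Rightarrow>\<^sub>L real)))).
        (\<forall>z\<in>S. (F has_derivative blinfun_apply (D1 z)) (at z within S)) \<and>
        (\<forall>z\<in>S. (D1 has_derivative blinfun_apply (D2 z)) (at z within S)) \<and>
        (\<forall>z\<in>S. (D2 has_derivative blinfun_apply (D3 z)) (at z within S)) \<and>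
        continuous_on S D3)"

definition l1norm :: "real^'n \<Rightarrow> real" where
  "l1norm v = (\<Sum>i\<in>UNIV. \<bar>v $ i\<bar>)"

text \<open>The two triggering functions, as functions of s = t - t_k;
  V0 stands for V(t_k).\<close>
definition phi_quad :: "real \<Rightarrow> real \<Rightarrow> real \<Rightarrow> real \<Rightarrow> real \<Rightarrow> real" where
  "phi_quad \<alpha> a b V0 s = 1/2 * a * b * s^2 + (a^2 + b * sqrt (2 * V0)) * s - 2 * \<alpha> * V0"

definition phi_cub :: "real \<Rightarrow> real \<Rightarrow> real \<Rightarrow> real \<Rightarrow> real" where
  "phi_cub \<alpha> b V0 s = 1/2 * b^2 * s^3 + 3/2 * \<alpha> * sqrt (2 * V0) * b * s^2
      + (sqrt (2 * V0) * b + 2 * \<alpha>^2 * V0) * s - 2 * \<alpha> * V0"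

end

theory Submission
  imports Defs
begin

text \<open>Along the \<open>k\<close>-th segment write \<open>G(u) = \<nabla>\<^sub>xf(x\<^sub>k + u xd\<^sub>k, t\<^sub>k + u)\<close>. The choice of \<open>xd\<^sub>k\<close>
  gives \<open>G'(0) = -\<alpha> G(0)\<close>, and the bounds on the second and third derivatives make \<open>G'\<close> bounded
  by \<open>a\<^sub>k\<close> and Lipschitz with constant \<open>b\<^sub>k\<close>. Hence \<open>V' = G \<bullet> G' \<le> \<phi>\<^sub>k\<close>, i.e.
  \<open>V(t\<^sub>k + u) \<le> V(t\<^sub>k) + \<integral>\<^sub>0\<^sup>u \<phi>\<^sub>k\<close>, and the triggering rule keeps \<open>V \<le> max (V(t\<^sub>k)) \<epsilon>\<close> on every
  segment. So \<open>V(t\<^sub>k)\<close> stays bounded, and with it \<open>xd\<^sub>k\<close>, \<open>a\<^sub>k\<close> and \<open>b\<^sub>k\<close>; on \<open>[0,1]\<close> this gives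
  \<open>\<phi>\<^sub>k(u) \<le> K u - 2\<alpha> V(t\<^sub>k)\<close> with \<open>K\<close> independent of \<open>k\<close>. That yields a uniform lower bound \<open>\<tau>\<close> on
  the inter-event times, and as long as \<open>V(t\<^sub>k) \<ge> \<epsilon>\<close> each step lowers \<open>V(t\<^sub>k)\<close> by at least
  \<open>\<alpha>\<epsilon>\<tau>\<close>; hence \<open>V(t\<^sub>k)\<close> eventually drops below \<open>\<epsilon>\<close> and stays there.\<close>

section \<open>Matrices, norms and derivatives\<close>

lemma bounded_linear_matrix_vector_mult_left: "bounded_linear (\<lambda>A::real^'n^'m. A *v v)"
proof -
  have "linear (\<lambda>A::real^'n^'m. A *v v)"
    by (rule linearI) (simp_all add: vec_eq_iff matrix_vector_mult_def sum.distrib sum_distrib_left algebra_simps)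
  then show ?thesis
    by (simp add: linear_conv_bounded_linear)
qed

lemma has_vector_derivative_matrix_vector_mult_left:
  fixes F :: "real \<Rightarrow> real^'n^'m"
  shows "(F has_vector_derivative D) net \<Longrightarrow> ((\<lambda>r. F r *v v) has_vector_derivative D *v v) net"
  using bounded_linear.has_vector_derivative[OF bounded_linear_matrix_vector_mult_left] by blast

lemma norm_matrix_vector_mult_le:
  fixes A :: "real^'n^'m"
  shows "onorm (\<lambda>v. A *v v) \<le> C \<Longrightarrow> norm (A *v v) \<le> C * norm v"
  by (meson dual_order.trans matrix_vector_mul_bounded_linear mult_right_mono norm_ge_zero onorm)

lemma onorm_scaleR_vector: "onorm (\<lambda>h::real. h *\<^sub>R D) = norm D"
  using onorm_scaleR_left[OF bounded_linear_ident, of D] by (simp add: onorm_id)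

lemma has_vector_derivative_shift_at:
  fixes f :: "real \<Rightarrow> 'a::real_normed_vector"
  assumes "(f has_vector_derivative D) (at (s + r))"
  shows "((\<lambda>q. f (s + q)) has_vector_derivative D) (at r)"
proof -
  have "((\<lambda>q. s + q) has_vector_derivative 1) (at r)"
    by (auto intro!: derivative_eq_intros)
  from vector_diff_chain_at[OF this] assms show ?thesis
    by (simp add: o_def)
qed

lemma differentiable_bound_linear_growth:
  fixes f :: "real \<Rightarrow> 'a::real_normed_vector"
  assumes cont: "continuous_on (closed_segment 0 h) f"
    and der: "\<And>r. r \<in> open_segment 0 h \<Longrightarrow> (f has_vector_derivative f' r) (at r)"
    and bnd: "\<And>r. r \<in> open_segment 0 h \<Longrightarrow> norm (f' r) \<le> c * \<bar>r\<bar> + d"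
  shows "norm (f h - f 0) \<le> c * h^2/2 + d * \<bar>h\<bar>"
proof -
  consider "h = 0" | "0 < h" | "h < 0"
    by linarith
  then show ?thesis
  proof cases
    case 1
    then show ?thesis by simp
  next
    case 2
    have "norm (f h - f 0) \<le> (c * h^2/2 + d * h) - (c * 0^2/2 + d * 0)"
      by (rule differentiable_bound_general[where \<phi>="\<lambda>r. c * r^2/2 + d * r" and \<phi>'="\<lambda>r. c * r + d"])
        (use 2 cont der bnd in \<open>auto simp: closed_segment_eq_real_ivl open_segment_eq_real_ivl
            has_real_derivative_iff_has_vector_derivative[symmetric] intro!: continuous_intros derivative_eq_intros\<close>)
    then show ?thesis
      using 2 by simp
  next
    case 3
    have "norm (f 0 - f h) \<le> (- c * 0^2/2 + d * 0) - (- c * h^2/2 + d * h)"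
      by (rule differentiable_bound_general[where \<phi>="\<lambda>r. - c * r^2/2 + d * r" and \<phi>'="\<lambda>r. - c * r + d"])
        (use 3 cont der bnd in \<open>auto simp: closed_segment_eq_real_ivl open_segment_eq_real_ivl
            has_real_derivative_iff_has_vector_derivative[symmetric] intro!: continuous_intros derivative_eq_intros\<close>)
    then show ?thesis
      using 3 by (simp add: norm_minus_commute)
  qed
qed

lemma l1norm_scaleR: "l1norm (c *\<^sub>R v) = \<bar>c\<bar> * l1norm v"
  by (simp add: l1norm_def abs_mult sum_distrib_left)

lemma l1norm_nonneg: "0 \<le> l1norm v"
  by (simp add: l1norm_def sum_nonneg)

lemma l1norm_le_card_norm: "l1norm (v::real^'n) \<le> real CARD('n) * norm v"
  unfolding l1norm_def using sum_bounded_above[of UNIV "\<lambda>i. \<bar>v $ i\<bar>" "norm v"]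
  by (simp add: component_le_norm_cart)

lemma coercive_matrix_invertible:
  fixes A :: "real^'n^'n"
  assumes "0 < m" and coercive: "\<And>v. m * (v \<bullet> v) \<le> v \<bullet> (A *v v)"
  shows "invertible A"
proof -
  have "v = 0" if "A *v v = 0" for v
  proof -
    from coercive[of v] that have "m * (v \<bullet> v) \<le> 0"
      by simp
    with \<open>0 < m\<close> have "v \<bullet> v \<le> 0"
      by (simp add: mult_le_0_iff)
    then show ?thesis
      by (metis inner_eq_zero_iff inner_ge_zero order_antisym)
  qed
  then show ?thesis
    by (simp add: matrix_left_invertible_ker invertible_left_inverse)
qed

lemma coercive_matrix_inv_cancel:
  fixes A :: "real^'n^'n"
  assumes "0 < m" and "\<And>v. m * (v \<bullet> v) \<le> v \<bullet> (A *v v)"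
  shows "A *v (matrix_inv A *v w) = w"
proof -
  have "A ** matrix_inv A = mat 1 \<and> matrix_inv A ** A = mat 1"
    using coercive_matrix_invertible[OF assms] unfolding invertible_def matrix_inv_def by (rule someI_ex)
  then show ?thesis
    by (simp add: matrix_vector_mul_assoc)
qed

lemma coercive_norm_le:
  fixes A :: "real^'n^'n"
  assumes "0 < m" and "m * (v \<bullet> v) \<le> v \<bullet> (A *v v)"
  shows "m * norm v \<le> norm (A *v v)"
proof -
  have "m * norm v * norm v \<le> v \<bullet> (A *v v)"
    using assms(2) by (simp add: power2_norm_eq_inner[symmetric] power2_eq_square)
  also have "\<dots> \<le> norm (A *v v) * norm v"
    using norm_cauchy_schwarz[of v "A *v v"] by (simp add: mult.commute)
  finally have "m * norm v * norm v \<le> norm (A *v v) * norm v" .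
  then show ?thesis
    by (cases "v = 0") (use assms(1) in auto)
qed

section \<open>The triggering polynomials\<close>

text \<open>With \<open>G\<close> the gradient along a segment and \<open>L\<close> its derivative, the next two lemmas are the
  pointwise bounds \<open>V' \<le> \<phi>\<^sub>k\<close> for the two choices of \<open>\<phi>\<^sub>k\<close>.\<close>

lemma inner_le_phi_quad:
  fixes g0 G L :: "'a::real_inner"
  assumes u: "0 \<le> u" and a: "0 \<le> a" and b: "0 \<le> b"
    and G: "norm (G - g0) \<le> a * u" and L: "norm (L - (- \<alpha>) *\<^sub>R g0) \<le> b * u" and La: "norm L \<le> a"
  shows "G \<bullet> L \<le> phi_quad \<alpha> a b (norm g0^2/2) u"
proof -
  have "G \<bullet> L = - \<alpha> * norm g0^2 + g0 \<bullet> (L - (- \<alpha>) *\<^sub>R g0) + (G - g0) \<bullet> L"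
    by (simp add: inner_simps power2_norm_eq_inner)
  also have "\<dots> \<le> - \<alpha> * norm g0^2 + norm g0 * (b * u) + (a * u) * a"
  proof -
    have "g0 \<bullet> (L - (- \<alpha>) *\<^sub>R g0) \<le> norm g0 * (b * u)"
      by (meson L mult_left_mono norm_cauchy_schwarz norm_ge_zero order_trans)
    moreover have "(G - g0) \<bullet> L \<le> (a * u) * a"
      by (meson G La mult_mono norm_cauchy_schwarz norm_ge_zero order_trans a u mult_nonneg_nonneg)
    ultimately show ?thesis
      by linarith
  qed
  also have "\<dots> \<le> phi_quad \<alpha> a b (norm g0^2/2) u"
    using a b u by (simp add: phi_quad_def algebra_simps power2_eq_square)
  finally show ?thesis .
qed

lemma inner_le_phi_cub:
  fixes g0 G L :: "'a::real_inner"
  assumes u: "0 \<le> u" and \<alpha>: "0 \<le> \<alpha>" and b: "0 \<le> b"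
    and L: "norm (L - (- \<alpha>) *\<^sub>R g0) \<le> b * u"
    and G: "norm (G - g0 - u *\<^sub>R ((- \<alpha>) *\<^sub>R g0)) \<le> b * u^2/2"
  shows "G \<bullet> L \<le> phi_cub \<alpha> b (norm g0^2/2) u"
proof -
  define R where "R = G - g0 - u *\<^sub>R ((- \<alpha>) *\<^sub>R g0)"
  define R' where "R' = L - (- \<alpha>) *\<^sub>R g0"
  define n where "n = norm g0"
  have "G \<bullet> L = (1 - \<alpha> * u) * (- \<alpha> * n^2) + (1 - \<alpha> * u) * (g0 \<bullet> R') + (- \<alpha>) * (R \<bullet> g0) + R \<bullet> R'"
    unfolding R_def R'_def n_def by (simp add: inner_simps algebra_simps power2_norm_eq_inner)
  also have "\<dots> \<le> (1 - \<alpha> * u) * (- \<alpha> * n^2) + (1 + \<alpha> * u) * (n * (b * u))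
      + \<alpha> * ((b * u^2/2) * n) + (b * u^2/2) * (b * u)"
  proof -
    have "(1 - \<alpha> * u) * (g0 \<bullet> R') \<le> \<bar>1 - \<alpha> * u\<bar> * \<bar>g0 \<bullet> R'\<bar>"
      by (metis abs_ge_self abs_mult)
    also have "\<dots> \<le> (1 + \<alpha> * u) * (n * (b * u))"
    proof (rule mult_mono)
      show "\<bar>g0 \<bullet> R'\<bar> \<le> n * (b * u)"
        using L unfolding R'_def n_def by (meson Cauchy_Schwarz_ineq2 mult_left_mono norm_ge_zero order_trans)
    qed (use \<alpha> u in \<open>auto simp: abs_le_iff\<close>)
    finally have "(1 - \<alpha> * u) * (g0 \<bullet> R') \<le> (1 + \<alpha> * u) * (n * (b * u))" .
    moreover have "- (R \<bullet> g0) \<le> (b * u^2/2) * n"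
    proof -
      have "- (R \<bullet> g0) \<le> norm R * norm g0"
        using Cauchy_Schwarz_ineq2[of R g0] by linarith
      also have "\<dots> \<le> (b * u^2/2) * n"
        using G unfolding R_def n_def by (intro mult_right_mono) auto
      finally show ?thesis .
    qed
    then have "(- \<alpha>) * (R \<bullet> g0) \<le> \<alpha> * ((b * u^2/2) * n)"
      using mult_left_mono[OF _ \<alpha>] by fastforce
    moreover have "R \<bullet> R' \<le> (b * u^2/2) * (b * u)"
      using G L unfolding R_def R'_def by (meson mult_mono norm_cauchy_schwarz norm_ge_zero order_trans)
    ultimately show ?thesis
      by linarith
  qed
  also have "\<dots> = phi_cub \<alpha> b (norm g0^2/2) u"
    unfolding phi_cub_def n_def by (simp add: algebra_simps power2_eq_square power3_eq_cube)
  finally show ?thesis .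
qed

definition Phi_quad :: "real \<Rightarrow> real \<Rightarrow> real \<Rightarrow> real \<Rightarrow> real \<Rightarrow> real" where
  "Phi_quad \<alpha> a b V0 u = a * b * u^3/6 + (a^2 + b * sqrt (2 * V0)) * u^2/2 - 2 * \<alpha> * V0 * u"

definition Phi_cub :: "real \<Rightarrow> real \<Rightarrow> real \<Rightarrow> real \<Rightarrow> real" where
  "Phi_cub \<alpha> b V0 u = b^2 * u^4/8 + \<alpha> * sqrt (2 * V0) * b * u^3/2
      + (sqrt (2 * V0) * b + 2 * \<alpha>^2 * V0) * u^2/2 - 2 * \<alpha> * V0 * u"

definition phi_choice :: "bool \<Rightarrow> real \<Rightarrow> real \<Rightarrow> real \<Rightarrow> real \<Rightarrow> real \<Rightarrow> real" where
  "phi_choice cubic \<alpha> a b V0 = (if cubic then phi_cub \<alpha> b V0 else phi_quad \<alpha> a b V0)"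

definition Phi_choice :: "bool \<Rightarrow> real \<Rightarrow> real \<Rightarrow> real \<Rightarrow> real \<Rightarrow> real \<Rightarrow> real" where
  "Phi_choice cubic \<alpha> a b V0 = (if cubic then Phi_cub \<alpha> b V0 else Phi_quad \<alpha> a b V0)"

lemma has_real_derivative_Phi_choice:
  "(Phi_choice cubic \<alpha> a b V0 has_real_derivative phi_choice cubic \<alpha> a b V0 u) (at u)"
  unfolding Phi_choice_def phi_choice_def Phi_quad_def Phi_cub_def phi_quad_def phi_cub_def
  by (cases cubic) (auto intro!: derivative_eq_intros simp: power2_eq_square power3_eq_cube algebra_simps)

lemma continuous_on_Phi_choice: "continuous_on S (Phi_choice cubic \<alpha> a b V0)"
  by (meson DERIV_continuous continuous_at_imp_continuous_on has_real_derivative_Phi_choice)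

lemma continuous_on_phi_choice: "continuous_on S (phi_choice cubic \<alpha> a b V0)"
  unfolding phi_choice_def phi_quad_def phi_cub_def by (cases cubic) (auto intro!: continuous_intros)

lemma Phi_choice_0 [simp]: "Phi_choice cubic \<alpha> a b V0 0 = 0"
  by (simp add: Phi_choice_def Phi_quad_def Phi_cub_def)

lemma phi_choice_0 [simp]: "phi_choice cubic \<alpha> a b V0 0 = - 2 * \<alpha> * V0"
  by (simp add: phi_choice_def phi_quad_def phi_cub_def)

lemma integral_phi_choice:
  assumes "0 \<le> u"
  shows "integral {c..c + u} (\<lambda>s. phi_choice cubic \<alpha> a b V0 (s - c)) = Phi_choice cubic \<alpha> a b V0 u"
proof -
  have "((\<lambda>s. Phi_choice cubic \<alpha> a b V0 (s - c)) has_real_derivative phi_choice cubic \<alpha> a b V0 (s - c)) (at s)"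
    for s
    using DERIV_chain2[OF has_real_derivative_Phi_choice DERIV_diff[OF DERIV_ident DERIV_const]] by simp
  then have "((\<lambda>s. phi_choice cubic \<alpha> a b V0 (s - c)) has_integral
      Phi_choice cubic \<alpha> a b V0 ((c + u) - c) - Phi_choice cubic \<alpha> a b V0 (c - c)) {c..c + u}"
    using assms by (intro fundamental_theorem_of_calculus)
      (auto simp: has_real_derivative_iff_has_vector_derivative has_vector_derivative_at_within)
  then show ?thesis
    by (simp add: integral_unique)
qed

lemma Phi_choice_antimono:
  assumes "u1 \<le> u2" and "\<And>u. u1 \<le> u \<Longrightarrow> u \<le> u2 \<Longrightarrow> phi_choice cubic \<alpha> a b V0 u \<le> 0"
  shows "Phi_choice cubic \<alpha> a b V0 u2 \<le> Phi_choice cubic \<alpha> a b V0 u1"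
  using assms has_real_derivative_Phi_choice by (blast intro: DERIV_nonpos_imp_nonincreasing)

definition trigger_slope :: "real \<Rightarrow> real \<Rightarrow> real \<Rightarrow> real \<Rightarrow> real" where
  "trigger_slope \<alpha> a b V0 = (a * b/2 + a^2 + b * sqrt (2 * V0))
      + (b^2/2 + 3/2 * \<alpha> * sqrt (2 * V0) * b + sqrt (2 * V0) * b + 2 * \<alpha>^2 * V0)"

lemma trigger_slope_mono:
  assumes "0 \<le> a" "a \<le> A" "0 \<le> b" "b \<le> B" "0 \<le> V0" "V0 \<le> W" "0 \<le> \<alpha>"
  shows "trigger_slope \<alpha> a b V0 \<le> trigger_slope \<alpha> A B W"
proof -
  have n: "0 \<le> sqrt (2 * V0)" "sqrt (2 * V0) \<le> sqrt (2 * W)"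
    using assms by auto
  have "a * b \<le> A * B" "a^2 \<le> A^2" "b^2 \<le> B^2" "b * sqrt (2 * V0) \<le> B * sqrt (2 * W)"
    using assms n by (auto intro!: mult_mono power_mono)
  moreover have "\<alpha> * sqrt (2 * V0) * b \<le> \<alpha> * sqrt (2 * W) * B" "\<alpha>^2 * V0 \<le> \<alpha>^2 * W"
    using assms n by (auto intro!: mult_mono)
  ultimately show ?thesis
    unfolding trigger_slope_def by (simp add: mult.commute)
qed

lemma phi_choice_le_slope:
  assumes "0 \<le> \<alpha>" "0 \<le> a" "0 \<le> b" "0 \<le> V0" and u: "0 \<le> u" "u \<le> 1"
  shows "phi_choice cubic \<alpha> a b V0 u \<le> trigger_slope \<alpha> a b V0 * u - 2 * \<alpha> * V0"
proof -
  define n where "n = sqrt (2 * V0)"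
  have "0 \<le> n"
    using assms by (simp add: n_def)
  have u2: "u^2 \<le> u" and u3: "u^3 \<le> u"
    using u by (auto simp: power2_eq_square power3_eq_cube intro: mult_le_one order_trans[OF mult_left_le])
  have quad: "a * b/2 * u^2 \<le> a * b/2 * u"
    using mult_left_mono[OF u2, of "a * b/2"] assms by simp
  have cub: "b^2/2 * u^3 \<le> b^2/2 * u"
    using mult_left_mono[OF u3, of "b^2/2"] by simp
  have cub': "3/2 * \<alpha> * n * b * u^2 \<le> 3/2 * \<alpha> * n * b * u"
    using mult_left_mono[OF u2, of "3/2 * \<alpha> * n * b"] assms \<open>0 \<le> n\<close> by simp
  have rest: "0 \<le> (a * b/2 + a^2 + b * n) * u" "0 \<le> (b^2/2 + 3/2 * \<alpha> * n * b + n * b + 2 * \<alpha>^2 * V0) * u"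
    using assms \<open>0 \<le> n\<close> by auto
  show ?thesis
    using quad cub cub' rest
    unfolding phi_choice_def phi_quad_def phi_cub_def trigger_slope_def n_def[symmetric]
    by (cases cubic) (simp_all add: algebra_simps)
qed

lemma Phi_choice_le_slope:
  assumes "0 \<le> \<alpha>" "0 \<le> a" "0 \<le> b" "0 \<le> V0" and u: "0 \<le> u" "u \<le> 1"
  shows "Phi_choice cubic \<alpha> a b V0 u \<le> trigger_slope \<alpha> a b V0 * u^2/2 - 2 * \<alpha> * V0 * u"
proof -
  let ?K = "trigger_slope \<alpha> a b V0"
  let ?W = "\<lambda>r. Phi_choice cubic \<alpha> a b V0 r - (?K * r^2/2 - 2 * \<alpha> * V0 * r)"
  have "?W u \<le> ?W 0"
  proof (rule DERIV_nonpos_imp_nonincreasing[OF u(1)])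
    fix r assume "0 \<le> r" "r \<le> u"
    have "(?W has_real_derivative phi_choice cubic \<alpha> a b V0 r - (?K * r - 2 * \<alpha> * V0)) (at r)"
      by (auto intro!: derivative_eq_intros has_real_derivative_Phi_choice)
    moreover have "phi_choice cubic \<alpha> a b V0 r - (?K * r - 2 * \<alpha> * V0) \<le> 0"
      using phi_choice_le_slope[of \<alpha> a b V0 r cubic] assms \<open>0 \<le> r\<close> \<open>r \<le> u\<close> by simp
    ultimately show "\<exists>y. (?W has_real_derivative y) (at r) \<and> y \<le> 0"
      by blast
  qed
  then show ?thesis
    by simp
qed

text \<open>The triggering rule in the local time \<open>u = t - t\<^sub>k\<close>, with \<open>D = t\<^sub>k\<^sub>+\<^sub>1 - t\<^sub>k\<close>.\<close>
definition triggered_step :: "bool \<Rightarrow> real \<Rightarrow> real \<Rightarrow> real \<Rightarrow> real \<Rightarrow> real \<Rightarrow> real \<Rightarrow> bool" where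
  "triggered_step cubic \<alpha> a b \<epsilon> V0 D \<longleftrightarrow> 0 < D \<and>
     (if \<epsilon> \<le> V0
      then phi_choice cubic \<alpha> a b V0 D = 0 \<and> (\<forall>u. 0 < u \<and> u < D \<longrightarrow> phi_choice cubic \<alpha> a b V0 u \<noteq> 0)
      else V0 + Phi_choice cubic \<alpha> a b V0 D = \<epsilon> \<and>
        (\<forall>u. 0 < u \<and> u < D \<longrightarrow> V0 + Phi_choice cubic \<alpha> a b V0 u \<noteq> \<epsilon>))"

definition dwell_bound :: "real \<Rightarrow> real \<Rightarrow> real \<Rightarrow> real" where
  "dwell_bound \<alpha> \<epsilon> K = min 1 (min (\<alpha> * \<epsilon> / K) (\<epsilon> / K))"

lemma dwell_bound_pos: "0 < \<alpha> \<Longrightarrow> 0 < \<epsilon> \<Longrightarrow> 0 < K \<Longrightarrow> 0 < dwell_bound \<alpha> \<epsilon> K"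
  by (simp add: dwell_bound_def)

lemma triggered_step_phi_nonpos:
  assumes step: "triggered_step cubic \<alpha> a b \<epsilon> V0 D" and big: "\<epsilon> \<le> V0"
    and "0 < \<alpha>" "0 < \<epsilon>" and u: "0 \<le> u" "u \<le> D"
  shows "phi_choice cubic \<alpha> a b V0 u \<le> 0"
proof (rule ccontr)
  assume pos: "\<not> ?thesis"
  have neg0: "phi_choice cubic \<alpha> a b V0 0 < 0"
    using assms by simp
  obtain c where c: "0 \<le> c" "c \<le> u" "phi_choice cubic \<alpha> a b V0 c = 0"
    using IVT'[of "phi_choice cubic \<alpha> a b V0" 0 0 u] neg0 pos u continuous_on_phi_choice by auto
  have "0 < c"
    using c neg0 by (cases "c = 0") auto
  moreover have "c < D"
  proof (rule ccontr)
    assume "\<not> c < D"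
    then have "c = u"
      using c u by linarith
    then show False
      using c pos by simp
  qed
  ultimately show False
    using step big c(3) by (auto simp: triggered_step_def)
qed

lemma triggered_step_le_max:
  assumes step: "triggered_step cubic \<alpha> a b \<epsilon> V0 D" and "0 < \<alpha>" "0 < \<epsilon>" and u: "0 \<le> u" "u \<le> D"
  shows "V0 + Phi_choice cubic \<alpha> a b V0 u \<le> max V0 \<epsilon>"
proof (cases "\<epsilon> \<le> V0")
  case True
  have "Phi_choice cubic \<alpha> a b V0 u \<le> Phi_choice cubic \<alpha> a b V0 0"
    using u by (intro Phi_choice_antimono triggered_step_phi_nonpos[OF step True]) (use assms in auto)
  then show ?thesis
    by simp
next
  case False
  show ?thesis
  proof (rule ccontr)
    assume above: "\<not> ?thesis"
    have "continuous_on {0..u} (\<lambda>r. V0 + Phi_choice cubic \<alpha> a b V0 r)"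
      by (intro continuous_intros continuous_on_Phi_choice)
    then obtain c where c: "0 \<le> c" "c \<le> u" "V0 + Phi_choice cubic \<alpha> a b V0 c = \<epsilon>"
      using IVT'[of "\<lambda>r. V0 + Phi_choice cubic \<alpha> a b V0 r" 0 \<epsilon> u] False above u by auto
    have "0 < c"
      using c False by (cases "c = 0") auto
    moreover have "c < D"
    proof (rule ccontr)
      assume "\<not> c < D"
      then have "c = u"
        using c u by linarith
      then show False
        using c above by simp
    qed
    ultimately show False
      using step False c(3) by (auto simp: triggered_step_def)
  qed
qed

lemma triggered_step_dwell_time:
  assumes step: "triggered_step cubic \<alpha> a b \<epsilon> V0 D"
    and "0 < \<alpha>" "0 < \<epsilon>" "0 \<le> a" "0 \<le> b" "0 \<le> V0" and K: "trigger_slope \<alpha> a b V0 \<le> K" "0 < K"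
  shows "dwell_bound \<alpha> \<epsilon> K \<le> D"
proof (rule ccontr)
  assume "\<not> ?thesis"
  then have "D < 1" "D < \<alpha> * \<epsilon> / K" "D < \<epsilon> / K"
    by (auto simp: dwell_bound_def)
  then have D: "0 < D" "D \<le> 1" "K * D < \<alpha> * \<epsilon>" "K * D < \<epsilon>"
    using step K by (auto simp: triggered_step_def less_divide_eq mult.commute)
  have slope: "trigger_slope \<alpha> a b V0 * D \<le> K * D" "trigger_slope \<alpha> a b V0 * D^2/2 \<le> K * D * D/2"
    using mult_right_mono[OF K(1), of D] mult_right_mono[OF K(1), of "D^2/2"] D
    by (simp_all add: power2_eq_square mult.assoc)
  show False
  proof (cases "\<epsilon> \<le> V0")
    case True
    have "0 = phi_choice cubic \<alpha> a b V0 D"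
      using step True by (simp add: triggered_step_def)
    also have "\<dots> \<le> K * D - 2 * \<alpha> * V0"
      using phi_choice_le_slope[of \<alpha> a b V0 D cubic] assms D slope(1) by linarith
    moreover have "\<alpha> * \<epsilon> \<le> \<alpha> * V0" "0 < \<alpha> * \<epsilon>"
      using True \<open>0 < \<alpha>\<close> \<open>0 < \<epsilon>\<close> by simp_all
    ultimately show False
      using D by linarith
  next
    case False
    have "\<epsilon> = V0 + Phi_choice cubic \<alpha> a b V0 D"
      using step False by (simp add: triggered_step_def)
    also have "\<dots> \<le> V0 + K * D * D/2 - 2 * \<alpha> * V0 * D"
      using Phi_choice_le_slope[of \<alpha> a b V0 D cubic] assms D slope(2) by linarith
    also have "\<dots> < \<epsilon>"
    proof (cases "\<epsilon> \<le> 2 * V0")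
      case True
      have "K * D * D < \<alpha> * \<epsilon> * D" "\<alpha> * \<epsilon> * D \<le> 2 * \<alpha> * V0 * D" "0 \<le> \<alpha> * V0 * D"
        using D True \<open>0 < \<alpha>\<close> \<open>0 \<le> V0\<close> by auto
      then show ?thesis
        using False by linarith
    next
      case False
      have "K * D * D \<le> K * D" "0 \<le> \<alpha> * V0 * D"
        using D K \<open>0 < \<alpha>\<close> \<open>0 \<le> V0\<close> by (simp_all add: mult_left_le)
      then show ?thesis
        using False D by linarith
    qed
    finally show False
      by simp
  qed
qed

lemma triggered_step_decrease:
  assumes step: "triggered_step cubic \<alpha> a b \<epsilon> V0 D" and big: "\<epsilon> \<le> V0"
    and "0 < \<alpha>" "0 < \<epsilon>" "0 \<le> a" "0 \<le> b" and K: "trigger_slope \<alpha> a b V0 \<le> K" "0 < K"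
  shows "V0 + Phi_choice cubic \<alpha> a b V0 D \<le> V0 - \<alpha> * \<epsilon> * dwell_bound \<alpha> \<epsilon> K"
proof -
  define \<tau> where "\<tau> = dwell_bound \<alpha> \<epsilon> K"
  have "\<tau> \<le> \<alpha> * \<epsilon> / K"
    by (simp add: \<tau>_def dwell_bound_def)
  then have \<tau>: "0 < \<tau>" "\<tau> \<le> 1" "K * \<tau> \<le> \<alpha> * \<epsilon>" "\<tau> \<le> D"
    using assms dwell_bound_pos[of \<alpha> \<epsilon> K] triggered_step_dwell_time[OF step]
    by (auto simp: \<tau>_def dwell_bound_def le_divide_eq mult.commute[of K])
  have "Phi_choice cubic \<alpha> a b V0 D \<le> Phi_choice cubic \<alpha> a b V0 \<tau>"
    using \<tau> by (intro Phi_choice_antimono triggered_step_phi_nonpos[OF step big]) (use assms in auto)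
  also have "\<dots> \<le> K * \<tau> * \<tau>/2 - 2 * \<alpha> * V0 * \<tau>"
  proof -
    have "trigger_slope \<alpha> a b V0 * (\<tau> * \<tau>) \<le> K * (\<tau> * \<tau>)"
      by (rule mult_right_mono[OF K(1)]) simp
    then show ?thesis
      using Phi_choice_le_slope[of \<alpha> a b V0 \<tau> cubic] assms \<tau>
      unfolding power2_eq_square mult.assoc by linarith
  qed
  also have "\<dots> \<le> \<alpha> * \<epsilon> * \<tau>/2 - 2 * \<alpha> * \<epsilon> * \<tau>"
  proof -
    have "K * \<tau> * \<tau> \<le> \<alpha> * \<epsilon> * \<tau>"
      by (rule mult_right_mono[OF \<tau>(3)]) (use \<tau> in simp)
    moreover have "\<epsilon> * (2 * \<alpha> * \<tau>) \<le> V0 * (2 * \<alpha> * \<tau>)"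
      by (rule mult_right_mono[OF big]) (use \<tau> \<open>0 < \<alpha>\<close> in simp)
    ultimately show ?thesis
      by (simp add: algebra_simps)
  qed
  also have "\<dots> \<le> - \<alpha> * \<epsilon> * \<tau>"
    using \<tau> \<open>0 < \<alpha>\<close> \<open>0 < \<epsilon>\<close> by simp
  finally show ?thesis
    by (simp add: \<tau>_def)
qed

lemma eventually_le_of_uniform_decrease:
  fixes W :: "nat \<Rightarrow> real"
  assumes nonneg: "\<And>k. 0 \<le> W k" and step: "\<And>k. W (Suc k) \<le> max (W k) \<epsilon>"
    and "0 < \<delta>" and decrease: "\<And>k. \<epsilon> \<le> W k \<Longrightarrow> W (Suc k) \<le> W k - \<delta>"
  shows "\<exists>m. \<forall>k\<ge>m. W k \<le> \<epsilon>"
proof -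
  have "\<exists>m. W m \<le> \<epsilon>"
  proof (rule ccontr)
    assume "\<nexists>m. W m \<le> \<epsilon>"
    then have above: "\<epsilon> < W k" for k
      using not_le by blast
    have descent: "W k \<le> W 0 - real k * \<delta>" for k
    proof (induction k)
      case (Suc k)
      then show ?case
        using decrease[of k] above[of k] by (simp add: algebra_simps)
    qed simp
    moreover obtain k where "W 0 < real k * \<delta>"
      using reals_Archimedean3[OF \<open>0 < \<delta>\<close>] by blast
    ultimately show False
      using descent[of k] nonneg[of k] by linarith
  qed
  then obtain m where "W m \<le> \<epsilon>" ..
  moreover have "W k \<le> \<epsilon>" if "m \<le> k" "W m \<le> \<epsilon>" for k
    using that
  proof (induction k rule: dec_induct)
    case (step k)
    then show ?case
      using assms(2)[of k] by simp
  qed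
  ultimately show ?thesis
    by blast
qed

section \<open>Lipschitz and Taylor bounds for the gradient\<close>

locale gradient_derivative_bounds =
  fixes gx gxt gxtt :: "real^'n \<Rightarrow> real \<Rightarrow> real^'n"
    and Hxx Hxxt :: "real^'n \<Rightarrow> real \<Rightarrow> real^'n^'n"
    and Hxxx :: "'n \<Rightarrow> real^'n \<Rightarrow> real \<Rightarrow> real^'n^'n"
    and Cxx Cxt Cxxt Cxtt Cxxx :: real
  assumes hess: "\<And>y s. s \<ge> 0 \<Longrightarrow> ((\<lambda>z. gx z s) has_derivative (\<lambda>h. Hxx y s *v h)) (at y)"
    and d_gxt: "\<And>y s. s \<ge> 0 \<Longrightarrow>
                  ((\<lambda>r. gx y r) has_vector_derivative gxt y s) (at s within {0..})"
    and d_Hxxt: "\<And>y s. s \<ge> 0 \<Longrightarrow>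
                  ((\<lambda>r. Hxx y r) has_vector_derivative Hxxt y s) (at s within {0..})"
    and d_gxtt: "\<And>y s. s \<ge> 0 \<Longrightarrow>
                  ((\<lambda>r. gxt y r) has_vector_derivative gxtt y s) (at s within {0..})"
    and d_Hxxx: "\<And>y s i. s \<ge> 0 \<Longrightarrow>
                  ((\<lambda>r. Hxx (y + r *\<^sub>R axis i 1) s) has_vector_derivative Hxxx i y s) (at 0)"
    and bnd_xx: "\<And>y s. s \<ge> 0 \<Longrightarrow> onorm (\<lambda>v. Hxx y s *v v) \<le> Cxx"
    and bnd_xt: "\<And>y s. s \<ge> 0 \<Longrightarrow> norm (gxt y s) \<le> Cxt"
    and bnd_xxt: "\<And>y s. s \<ge> 0 \<Longrightarrow> onorm (\<lambda>v. Hxxt y s *v v) \<le> Cxxt"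
    and bnd_xtt: "\<And>y s. s \<ge> 0 \<Longrightarrow> norm (gxtt y s) \<le> Cxtt"
    and bnd_xxx: "\<And>y s i. s \<ge> 0 \<Longrightarrow> onorm (\<lambda>v. Hxxx i y s *v v) \<le> Cxxx"
begin

lemma bound_constants_nonneg: "0 \<le> Cxx" "0 \<le> Cxt" "0 \<le> Cxxt" "0 \<le> Cxtt" "0 \<le> Cxxx"
  using order_trans[OF onorm_pos_le[OF matrix_vector_mul_bounded_linear] bnd_xx[of 0 0]]
    order_trans[OF norm_ge_zero bnd_xt[of 0 0]]
    order_trans[OF onorm_pos_le[OF matrix_vector_mul_bounded_linear] bnd_xxt[of 0 0]]
    order_trans[OF norm_ge_zero bnd_xtt[of 0 0]]
    order_trans[OF onorm_pos_le[OF matrix_vector_mul_bounded_linear] bnd_xxx[where y=0 and s=0]]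
  by simp_all

lemma hessian_diff_axis_le:
  assumes s: "0 \<le> s"
  shows "norm ((Hxx (y + c *\<^sub>R axis i 1) s - Hxx y s) *v v) \<le> Cxxx * \<bar>c\<bar> * norm v"
proof -
  let ?F = "\<lambda>r. Hxx (y + r *\<^sub>R axis i 1) s"
  have "((\<lambda>q. ?F (r + q)) has_vector_derivative Hxxx i (y + r *\<^sub>R axis i 1) s) (at 0)" for r
    using d_Hxxx[OF s, of "y + r *\<^sub>R axis i 1" i] by (simp add: scaleR_add_left add.assoc)
  then have "(?F has_vector_derivative Hxxx i (y + r *\<^sub>R axis i 1) s) (at r)" for r
    using has_vector_derivative_shift_at[of "\<lambda>q. ?F (r + q)" _ "- r" r] by simp
  then have "((\<lambda>r. ?F r *v v) has_vector_derivative Hxxx i (y + r *\<^sub>R axis i 1) s *v v) (at r)" for r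
    by (rule has_vector_derivative_matrix_vector_mult_left)
  then have "norm (?F c *v v - ?F 0 *v v) \<le> (Cxxx * norm v) * norm (c - 0)"
    using bnd_xxx[OF s] unfolding has_vector_derivative_def
    by (intro differentiable_bound[where S=UNIV])
      (auto simp: onorm_scaleR_vector intro!: norm_matrix_vector_mult_le)
  then show ?thesis
    by (simp add: matrix_vector_mult_diff_rdistrib mult_ac)
qed

text \<open>Moving one coordinate at a time is what produces the one-norm.\<close>
lemma hessian_diff_space_le:
  assumes s: "0 \<le> s"
  shows "norm ((Hxx y' s - Hxx y s) *v v) \<le> Cxxx * l1norm (y' - y) * norm v"
proof -
  define d where "d = y' - y"
  have telescope: "norm ((Hxx (y + (\<Sum>i\<in>S. (d $ i) *\<^sub>R axis i 1)) s - Hxx y s) *v v)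
      \<le> Cxxx * (\<Sum>i\<in>S. \<bar>d $ i\<bar>) * norm v" if "finite S" for S
    using that
  proof (induction S rule: finite_induct)
    case (insert j S)
    define P where "P = y + (\<Sum>i\<in>S. (d $ i) *\<^sub>R axis i 1)"
    have eq: "y + (\<Sum>i\<in>insert j S. (d $ i) *\<^sub>R axis i 1) = P + (d $ j) *\<^sub>R axis j 1"
      using insert.hyps by (simp add: P_def add_ac)
    have "(Hxx (P + (d $ j) *\<^sub>R axis j 1) s - Hxx y s) *v v =
        (Hxx (P + (d $ j) *\<^sub>R axis j 1) s - Hxx P s) *v v + (Hxx P s - Hxx y s) *v v"
      by (simp only: matrix_vector_mult_diff_rdistrib) simp
    then have "norm ((Hxx (P + (d $ j) *\<^sub>R axis j 1) s - Hxx y s) *v v)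
        \<le> norm ((Hxx (P + (d $ j) *\<^sub>R axis j 1) s - Hxx P s) *v v) + norm ((Hxx P s - Hxx y s) *v v)"
      by (metis norm_triangle_ineq)
    also have "\<dots> \<le> Cxxx * \<bar>d $ j\<bar> * norm v + Cxxx * (\<Sum>i\<in>S. \<bar>d $ i\<bar>) * norm v"
      using hessian_diff_axis_le[OF s] insert.IH unfolding P_def by (rule add_mono)
    also have "\<dots> = Cxxx * (\<Sum>i\<in>insert j S. \<bar>d $ i\<bar>) * norm v"
      using insert.hyps by (simp add: distrib_left distrib_right)
    finally show ?case
      unfolding eq .
  qed simp
  moreover have "y + (\<Sum>i\<in>UNIV. (d $ i) *\<^sub>R axis i 1) = y'"
    using basis_expansion[of d] by (simp add: d_def scalar_mult_eq_scaleR)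
  ultimately show ?thesis
    using telescope[of UNIV] by (simp add: l1norm_def d_def)
qed

lemma hessian_diff_time_le:
  assumes "0 \<le> s" "0 \<le> s'"
  shows "norm ((Hxx y s' - Hxx y s) *v v) \<le> Cxxt * \<bar>s' - s\<bar> * norm v"
proof -
  have "norm (Hxx y s' *v v - Hxx y s *v v) \<le> (Cxxt * norm v) * norm (s' - s)"
    using assms has_vector_derivative_matrix_vector_mult_left[OF d_Hxxt] bnd_xxt
    by (intro differentiable_bound[where S="{0..}" and f'="\<lambda>r h. h *\<^sub>R (Hxxt y r *v v)"])
      (auto simp: onorm_scaleR_vector has_vector_derivative_def intro!: norm_matrix_vector_mult_le)
  then show ?thesis
    by (simp add: matrix_vector_mult_diff_rdistrib mult_ac)
qed

lemma gxt_diff_time_le: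
  assumes "0 \<le> s" "0 \<le> s'"
  shows "norm (gxt y s' - gxt y s) \<le> Cxtt * \<bar>s' - s\<bar>"
proof -
  have "norm (gxt y s' - gxt y s) \<le> Cxtt * norm (s' - s)"
    using assms d_gxtt bnd_xtt
    by (intro differentiable_bound[where S="{0..}" and f'="\<lambda>r h. h *\<^sub>R gxtt y r"])
      (auto simp: onorm_scaleR_vector has_vector_derivative_def)
  then show ?thesis
    by simp
qed

lemma hessian_diff_le:
  assumes "0 \<le> s" "0 \<le> s'"
  shows "norm ((Hxx y' s' - Hxx y s) *v v) \<le> (Cxxx * l1norm (y' - y) + Cxxt * \<bar>s' - s\<bar>) * norm v"
proof -
  have "(Hxx y' s' - Hxx y s) *v v = (Hxx y' s' - Hxx y s') *v v + (Hxx y s' - Hxx y s) *v v"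
    by (simp add: matrix_vector_mult_diff_rdistrib)
  then have "norm ((Hxx y' s' - Hxx y s) *v v)
      \<le> norm ((Hxx y' s' - Hxx y s') *v v) + norm ((Hxx y s' - Hxx y s) *v v)"
    by (metis norm_triangle_ineq)
  also have "\<dots> \<le> Cxxx * l1norm (y' - y) * norm v + Cxxt * \<bar>s' - s\<bar> * norm v"
    using hessian_diff_space_le hessian_diff_time_le assms by (intro add_mono) auto
  finally show ?thesis
    by (simp add: distrib_right)
qed


lemma gx_taylor_space_le:
  assumes s: "0 \<le> s" and sh: "0 \<le> s + h"
  shows "norm (gx (z + h *\<^sub>R v) (s + h) - gx z (s + h) - h *\<^sub>R (Hxx z s *v v))
    \<le> (Cxxx * l1norm v * norm v) * h^2/2 + (Cxxt * \<bar>h\<bar> * norm v) * \<bar>h\<bar>"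
proof -
  let ?f = "\<lambda>r. gx (z + r *\<^sub>R v) (s + h) - r *\<^sub>R (Hxx z s *v v)"
  let ?f' = "\<lambda>r. (Hxx (z + r *\<^sub>R v) (s + h) - Hxx z s) *v v"
  have der: "(?f has_vector_derivative ?f' r) (at r)" for r
  proof -
    have "((\<lambda>r. gx (z + r *\<^sub>R v) (s + h)) has_derivative (\<lambda>q. Hxx (z + r *\<^sub>R v) (s + h) *v (q *\<^sub>R v))) (at r)"
      by (rule has_derivative_compose[OF _ hess[OF sh]]) (auto intro!: derivative_eq_intros)
    then show ?thesis
      unfolding has_vector_derivative_def
      by (auto intro!: derivative_eq_intros simp: matrix_vector_mult_scaleR matrix_vector_mult_diff_rdistrib algebra_simps)
  qed
  have "norm (?f h - ?f 0) \<le> (Cxxx * l1norm v * norm v) * h^2/2 + (Cxxt * \<bar>h\<bar> * norm v) * \<bar>h\<bar>"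
  proof (rule differentiable_bound_linear_growth[OF _ der])
    show "continuous_on (closed_segment 0 h) ?f"
      using der by (meson continuous_at_imp_continuous_on has_vector_derivative_continuous)
    fix r
    have "norm (?f' r) \<le> (Cxxx * l1norm ((z + r *\<^sub>R v) - z) + Cxxt * \<bar>(s + h) - s\<bar>) * norm v"
      by (rule hessian_diff_le[OF s sh])
    then show "norm (?f' r) \<le> (Cxxx * l1norm v * norm v) * \<bar>r\<bar> + Cxxt * \<bar>h\<bar> * norm v"
      by (simp add: l1norm_scaleR algebra_simps)
  qed
  then show ?thesis
    by (simp add: algebra_simps)
qed

lemma gx_taylor_time_le:
  assumes s: "0 \<le> s" and sh: "0 \<le> s + h"
  shows "norm (gx z (s + h) - gx z s - h *\<^sub>R gxt z s) \<le> Cxtt * h^2/2"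
proof -
  let ?f = "\<lambda>r. gx z (s + r) - r *\<^sub>R gxt z s"
  let ?f' = "\<lambda>r. gxt z (s + r) - gxt z s"
  have seg: "0 \<le> s + r" if "r \<in> closed_segment 0 h" for r
    using s sh that by (auto simp: closed_segment_eq_real_ivl split: if_splits)
  have oseg: "0 < s + r" if "r \<in> open_segment 0 h" for r
    using s sh that by (auto simp: open_segment_eq_real_ivl split: if_splits)
  have "continuous_on {0..} (gx z)"
    using d_gxt has_vector_derivative_continuous by (fastforce simp: continuous_on_eq_continuous_within)
  then have cont: "continuous_on (closed_segment 0 h) ?f"
    by (auto intro!: continuous_intros continuous_on_compose2[of "{0..}" "gx z"] dest: seg)
  have der: "(?f has_vector_derivative ?f' r) (at r)" if r: "r \<in> open_segment 0 h" for r
  proof -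
    have "at (s + r) within {0..} = at (s + r)"
      using oseg[OF r] by (intro at_within_interior) auto
    then have "(gx z has_vector_derivative gxt z (s + r)) (at (s + r))"
      using d_gxt[of "s + r" z] oseg[OF r] by simp
    from has_vector_derivative_shift_at[OF this] show ?thesis
      by (auto intro!: derivative_eq_intros)
  qed
  have "norm (?f h - ?f 0) \<le> Cxtt * h^2/2 + 0 * \<bar>h\<bar>"
  proof (rule differentiable_bound_linear_growth[OF cont der])
    fix r assume r: "r \<in> open_segment 0 h"
    show "norm (?f' r) \<le> Cxtt * \<bar>r\<bar> + 0"
      using gxt_diff_time_le[OF s, of "s + r" z] oseg[OF r] by simp
  qed
  then show ?thesis
    by (simp add: algebra_simps)
qed

definition second_order_bound :: "real^'n \<Rightarrow> real" where
  "second_order_bound v = (Cxxx * l1norm v + 2 * Cxxt) * norm v + Cxtt"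

lemma second_order_bound_nonneg: "0 \<le> second_order_bound v"
  using bound_constants_nonneg l1norm_nonneg[of v] by (simp add: second_order_bound_def)

lemma gx_taylor_le:
  assumes "0 \<le> s" "0 \<le> s + h"
  shows "norm (gx (z + h *\<^sub>R v) (s + h) - gx z s - h *\<^sub>R (Hxx z s *v v + gxt z s))
    \<le> second_order_bound v * h^2/2"
proof -
  have "norm (gx (z + h *\<^sub>R v) (s + h) - gx z s - h *\<^sub>R (Hxx z s *v v + gxt z s))
      \<le> norm (gx (z + h *\<^sub>R v) (s + h) - gx z (s + h) - h *\<^sub>R (Hxx z s *v v))
        + norm (gx z (s + h) - gx z s - h *\<^sub>R gxt z s)"
    using norm_triangle_ineq[of "gx (z + h *\<^sub>R v) (s + h) - gx z (s + h) - h *\<^sub>R (Hxx z s *v v)"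
        "gx z (s + h) - gx z s - h *\<^sub>R gxt z s"]
    by (simp add: algebra_simps)
  also have "\<dots> \<le> ((Cxxx * l1norm v * norm v) * h^2/2 + (Cxxt * \<bar>h\<bar> * norm v) * \<bar>h\<bar>) + Cxtt * h^2/2"
    by (rule add_mono[OF gx_taylor_space_le[OF assms] gx_taylor_time_le[OF assms]])
  also have "\<dots> = second_order_bound v * h^2/2"
    by (simp add: second_order_bound_def algebra_simps power2_eq_square abs_mult_self_eq)
  finally show ?thesis .
qed


definition path_grad :: "real^'n \<Rightarrow> real^'n \<Rightarrow> real \<Rightarrow> real \<Rightarrow> real^'n" where
  "path_grad y v s r = gx (y + r *\<^sub>R v) (s + r)"

definition path_grad_deriv :: "real^'n \<Rightarrow> real^'n \<Rightarrow> real \<Rightarrow> real \<Rightarrow> real^'n" where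
  "path_grad_deriv y v s r = Hxx (y + r *\<^sub>R v) (s + r) *v v + gxt (y + r *\<^sub>R v) (s + r)"

lemma path_grad_taylor_le:
  assumes "0 \<le> s + p" "0 \<le> s + q"
  shows "norm (path_grad y v s q - path_grad y v s p - (q - p) *\<^sub>R path_grad_deriv y v s p)
    \<le> second_order_bound v * (q - p)^2/2"
  using gx_taylor_le[of "s + p" "q - p" "y + p *\<^sub>R v" v] assms
  by (simp add: path_grad_def path_grad_deriv_def algebra_simps)

lemma norm_path_grad_deriv_le:
  assumes "0 \<le> s + r"
  shows "norm (path_grad_deriv y v s r) \<le> Cxx * norm v + Cxt"
  unfolding path_grad_deriv_def
  using assms by (intro order_trans[OF norm_triangle_ineq] add_mono norm_matrix_vector_mult_le bnd_xx bnd_xt)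

text \<open>Comparing the Taylor expansions at \<open>p\<close> and at \<open>q\<close> bounds the variation of the derivative
  without any mixed second derivative of the gradient.\<close>
lemma path_grad_deriv_lipschitz:
  assumes p: "0 \<le> s + p" and q: "0 \<le> s + q"
  shows "norm (path_grad_deriv y v s q - path_grad_deriv y v s p) \<le> second_order_bound v * \<bar>q - p\<bar>"
proof (cases "q = p")
  case False
  let ?G = "path_grad y v s" and ?L = "path_grad_deriv y v s" and ?B = "second_order_bound v"
  have "(q - p) *\<^sub>R (?L q - ?L p) = (?G q - ?G p - (q - p) *\<^sub>R ?L p) + (?G p - ?G q - (p - q) *\<^sub>R ?L q)"
    by (simp add: algebra_simps)
  then have "norm ((q - p) *\<^sub>R (?L q - ?L p))
      \<le> norm (?G q - ?G p - (q - p) *\<^sub>R ?L p) + norm (?G p - ?G q - (p - q) *\<^sub>R ?L q)"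
    by (metis norm_triangle_ineq)
  also have "\<dots> \<le> ?B * (q - p)^2/2 + ?B * (p - q)^2/2"
    by (rule add_mono[OF path_grad_taylor_le[OF p q] path_grad_taylor_le[OF q p]])
  also have "\<dots> = \<bar>q - p\<bar> * (?B * \<bar>q - p\<bar>)"
  proof -
    have "\<bar>q - p\<bar> * (?B * \<bar>q - p\<bar>) = ?B * (q - p)^2"
      by (simp add: power2_eq_square mult.left_commute)
    then show ?thesis
      unfolding power2_commute[of p q] by linarith
  qed
  finally show ?thesis
    using False by simp
qed simp

lemma path_grad_has_vector_derivative:
  assumes p: "0 \<le> s + p"
  shows "(path_grad y v s has_vector_derivative path_grad_deriv y v s p) (at p within {r. 0 \<le> s + r})"
  unfolding has_vector_derivative_def has_derivative_iff_norm
proof (intro conjI)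
  let ?G = "path_grad y v s" and ?L = "path_grad_deriv y v s" and ?B = "second_order_bound v"
  show "bounded_linear (\<lambda>x. x *\<^sub>R ?L p)"
    by (rule bounded_linear_scaleR_left)
  show "((\<lambda>q. norm (?G q - ?G p - (q - p) *\<^sub>R ?L p) / norm (q - p)) \<longlongrightarrow> 0)
      (at p within {r. 0 \<le> s + r})"
  proof (rule Lim_null_comparison)
    show "\<forall>\<^sub>F q in at p within {r. 0 \<le> s + r}.
        norm (norm (?G q - ?G p - (q - p) *\<^sub>R ?L p) / norm (q - p)) \<le> ?B * \<bar>q - p\<bar>/2"
      unfolding eventually_at_filter
    proof (intro always_eventually allI impI)
      fix q assume "q \<noteq> p" "q \<in> {r. 0 \<le> s + r}"
      then have "norm (?G q - ?G p - (q - p) *\<^sub>R ?L p) \<le> ?B * (q - p)^2/2"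
        using path_grad_taylor_le[OF p] by simp
      moreover have "?B * (q - p)^2/2 = (?B * \<bar>q - p\<bar>/2) * \<bar>q - p\<bar>"
        by (simp add: power2_eq_square mult.assoc)
      ultimately have "norm (?G q - ?G p - (q - p) *\<^sub>R ?L p) \<le> (?B * \<bar>q - p\<bar>/2) * \<bar>q - p\<bar>"
        by linarith
      then show "norm (norm (?G q - ?G p - (q - p) *\<^sub>R ?L p) / norm (q - p)) \<le> ?B * \<bar>q - p\<bar>/2"
        using \<open>q \<noteq> p\<close> by (simp add: divide_le_eq)
    qed
    show "((\<lambda>q. ?B * \<bar>q - p\<bar>/2) \<longlongrightarrow> 0) (at p within {r. 0 \<le> s + r})"
      by (auto intro!: tendsto_eq_intros)
  qed
qed

lemma path_grad_has_vector_derivative_at: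
  assumes "0 < s + p"
  shows "(path_grad y v s has_vector_derivative path_grad_deriv y v s p) (at p)"
proof -
  have "{- s<..} \<subseteq> {r. 0 \<le> s + r}"
    by auto
  then have "(path_grad y v s has_vector_derivative path_grad_deriv y v s p) (at p within {- s<..})"
    using assms by (intro has_vector_derivative_within_subset[OF path_grad_has_vector_derivative]) auto
  moreover have "at p within {- s<..} = at p"
    using assms by (intro at_within_open) auto
  ultimately show ?thesis
    by simp
qed

lemma continuous_on_path_grad: "continuous_on {r. 0 \<le> s + r} (path_grad y v s)"
  unfolding continuous_on_eq_continuous_within
  using has_vector_derivative_continuous[OF path_grad_has_vector_derivative] by blast

lemma path_grad_dist_le:
  assumes "0 \<le> s" "0 \<le> u"
  shows "norm (path_grad y v s u - gx y s) \<le> (Cxx * norm v + Cxt) * u"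
proof -
  have "norm (path_grad y v s u - path_grad y v s 0) \<le> (Cxx * norm v + Cxt) * norm (u - 0)"
  proof (rule differentiable_bound[where S="{0..u}" and f'="\<lambda>r h. h *\<^sub>R path_grad_deriv y v s r"])
    fix r assume r: "r \<in> {0..u}"
    have "{0..u} \<subseteq> {r. 0 \<le> s + r}"
      using assms by auto
    with r assms show "(path_grad y v s has_derivative (\<lambda>h. h *\<^sub>R path_grad_deriv y v s r)) (at r within {0..u})"
      using has_vector_derivative_within_subset[OF path_grad_has_vector_derivative]
      by (simp add: has_vector_derivative_def)
    show "onorm (\<lambda>h. h *\<^sub>R path_grad_deriv y v s r) \<le> Cxx * norm v + Cxt"
      using r assms by (simp add: onorm_scaleR_vector norm_path_grad_deriv_le)
  qed (use assms in auto)
  then show ?thesis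
    using assms by (simp add: path_grad_def)
qed


lemma path_grad_inner_deriv_le:
  assumes s: "0 \<le> s" and r: "0 \<le> r" and "0 \<le> \<alpha>"
    and start: "path_grad_deriv y v s 0 = (- \<alpha>) *\<^sub>R gx y s"
  shows "path_grad y v s r \<bullet> path_grad_deriv y v s r
    \<le> phi_choice cubic \<alpha> (Cxx * norm v + Cxt) (second_order_bound v) (norm (gx y s)^2/2) r"
proof -
  let ?G = "path_grad y v s" and ?L = "path_grad_deriv y v s" and ?g0 = "gx y s"
  have a: "0 \<le> Cxx * norm v + Cxt"
    using bound_constants_nonneg by simp
  have G: "norm (?G r - ?g0) \<le> (Cxx * norm v + Cxt) * r"
    by (rule path_grad_dist_le[OF s r])
  have L: "norm (?L r - (- \<alpha>) *\<^sub>R ?g0) \<le> second_order_bound v * r"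
    using path_grad_deriv_lipschitz[of s 0 r y v] s r by (simp add: start)
  have La: "norm (?L r) \<le> Cxx * norm v + Cxt"
    using norm_path_grad_deriv_le s r by simp
  have R: "norm (?G r - ?g0 - r *\<^sub>R ((- \<alpha>) *\<^sub>R ?g0)) \<le> second_order_bound v * r^2/2"
    using path_grad_taylor_le[of s 0 r y v] s r by (simp add: start path_grad_def)
  show ?thesis
    using inner_le_phi_quad[OF r a second_order_bound_nonneg G L La]
      inner_le_phi_cub[OF r \<open>0 \<le> \<alpha>\<close> second_order_bound_nonneg L R]
    by (simp add: phi_choice_def)
qed

lemma path_energy_le:
  assumes s: "0 \<le> s" and "0 \<le> \<alpha>" and start: "path_grad_deriv y v s 0 = (- \<alpha>) *\<^sub>R gx y s"
    and u: "0 \<le> u"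
  shows "norm (path_grad y v s u)^2/2 \<le> norm (gx y s)^2/2
    + Phi_choice cubic \<alpha> (Cxx * norm v + Cxt) (second_order_bound v) (norm (gx y s)^2/2) u"
proof -
  let ?G = "path_grad y v s" and ?L = "path_grad_deriv y v s"
  let ?Phi = "Phi_choice cubic \<alpha> (Cxx * norm v + Cxt) (second_order_bound v) (norm (gx y s)^2/2)"
  let ?phi = "phi_choice cubic \<alpha> (Cxx * norm v + Cxt) (second_order_bound v) (norm (gx y s)^2/2)"
  let ?W = "\<lambda>r. (?G r \<bullet> ?G r)/2 - ?Phi r"
  have "?W u \<le> ?W 0"
  proof (rule DERIV_nonpos_imp_decreasing_open[OF u])
    have "continuous_on {0..u} ?G"
      by (rule continuous_on_subset[OF continuous_on_path_grad]) (use s in auto)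
    then show "continuous_on {0..u} ?W"
      by (intro continuous_intros continuous_on_Phi_choice) auto
    fix r assume r: "0 < r" "r < u"
    then have "(?G has_derivative (\<lambda>h. h *\<^sub>R ?L r)) (at r)"
      using path_grad_has_vector_derivative_at[of s r] s by (simp add: has_vector_derivative_def)
    then have "(?W has_real_derivative ?G r \<bullet> ?L r - ?phi r) (at r)"
      unfolding has_field_derivative_def
      by (auto intro!: derivative_eq_intros has_real_derivative_Phi_choice[unfolded has_field_derivative_def]
          simp: fun_eq_iff inner_commute algebra_simps)
    moreover have "?G r \<bullet> ?L r \<le> ?phi r"
      using path_grad_inner_deriv_le[OF s _ assms(2) start] r by simp
    ultimately show "\<exists>d. (?W has_real_derivative d) (at r) \<and> d \<le> 0"
      by (intro exI conjI) auto
  qed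
  then show ?thesis
    by (simp add: path_grad_def power2_norm_eq_inner)
qed

end

section \<open>The self-triggered iteration\<close>

locale self_triggered = gradient_derivative_bounds gx gxt gxtt Hxx Hxxt Hxxx Cxx Cxt Cxxt Cxtt Cxxx
  for gx gxt gxtt :: "real^'n \<Rightarrow> real \<Rightarrow> real^'n"
    and Hxx Hxxt :: "real^'n \<Rightarrow> real \<Rightarrow> real^'n^'n"
    and Hxxx :: "'n \<Rightarrow> real^'n \<Rightarrow> real \<Rightarrow> real^'n^'n"
    and Cxx Cxt Cxxt Cxtt Cxxx :: real +
  fixes m \<alpha> \<epsilon> :: real
    and cubic :: bool
    and t :: "nat \<Rightarrow> real" and x xd :: "nat \<Rightarrow> real^'n"
    and a b :: "nat \<Rightarrow> real"
    and V phi :: "nat \<Rightarrow> real \<Rightarrow> real"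
  assumes m_pos: "m > 0"
    and strong: "\<And>y s v. s \<ge> 0 \<Longrightarrow> v \<bullet> (Hxx y s *v v) \<ge> m * (v \<bullet> v)"
    and Cxt_pos: "Cxt > 0"
    and alpha_pos: "\<alpha> > 0" and eps_pos: "\<epsilon> > 0"
    and t0: "t 0 = 0"
    and xd_def: "\<And>k. xd k = - (matrix_inv (Hxx (x k) (t k)) *v
                                  (\<alpha> *\<^sub>R gx (x k) (t k) + gxt (x k) (t k)))"
    and V_def: "\<And>k s. V k s = (norm (gx (x k + (s - t k) *\<^sub>R xd k) s))^2 / 2"
    and a_def: "\<And>k. a k = Cxx * norm (xd k) + Cxt"
    and b_def: "\<And>k. b k = (Cxxx * l1norm (xd k) + 2 * Cxxt) * norm (xd k) + Cxtt"
    and phi_def: "\<And>k s. phi k s = (if cubic then phi_cub \<alpha> (b k) (V k (t k)) (s - t k)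
                                   else phi_quad \<alpha> (a k) (b k) (V k (t k)) (s - t k))"
    and step_big: "\<And>k. V k (t k) \<ge> \<epsilon> \<Longrightarrow>
         t k < t (Suc k) \<and> phi k (t (Suc k)) = 0 \<and>
         (\<forall>s. t k < s \<and> s < t (Suc k) \<longrightarrow> phi k s \<noteq> 0)"
    and step_small: "\<And>k. V k (t k) < \<epsilon> \<Longrightarrow>
         t k < t (Suc k) \<and> V k (t k) + integral {t k..t (Suc k)} (phi k) = \<epsilon> \<and>
         (\<forall>s. t k < s \<and> s < t (Suc k) \<longrightarrow> V k (t k) + integral {t k..s} (phi k) \<noteq> \<epsilon>)"
    and x_next: "\<And>k. x (Suc k) = x k + (t (Suc k) - t k) *\<^sub>R xd k"
begin

lemma phi_eq: "phi k s = phi_choice cubic \<alpha> (a k) (b k) (V k (t k)) (s - t k)"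
  by (simp add: phi_def phi_choice_def)

lemma integral_phi:
  assumes "t k \<le> s"
  shows "integral {t k..s} (phi k) = Phi_choice cubic \<alpha> (a k) (b k) (V k (t k)) (s - t k)"
  using integral_phi_choice[of "s - t k" "t k" cubic \<alpha> "a k" "b k" "V k (t k)"] assms
  by (simp add: phi_eq[abs_def])

lemma step_triggered: "triggered_step cubic \<alpha> (a k) (b k) \<epsilon> (V k (t k)) (t (Suc k) - t k)"
proof (cases "\<epsilon> \<le> V k (t k)")
  case True
  then have "t k < t (Suc k)" "phi k (t (Suc k)) = 0"
    and nz: "\<And>s. t k < s \<Longrightarrow> s < t (Suc k) \<Longrightarrow> phi k s \<noteq> 0"
    using step_big[of k] by auto
  moreover have "phi_choice cubic \<alpha> (a k) (b k) (V k (t k)) u \<noteq> 0" if "0 < u" "u < t (Suc k) - t k" for u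
    using nz[of "t k + u"] that by (simp add: phi_eq)
  ultimately show ?thesis
    using True by (simp add: triggered_step_def phi_eq)
next
  case False
  then have "t k < t (Suc k)" "V k (t k) + integral {t k..t (Suc k)} (phi k) = \<epsilon>"
    and nz: "\<And>s. t k < s \<Longrightarrow> s < t (Suc k) \<Longrightarrow> V k (t k) + integral {t k..s} (phi k) \<noteq> \<epsilon>"
    using step_small[of k] by auto
  moreover have "V k (t k) + Phi_choice cubic \<alpha> (a k) (b k) (V k (t k)) u \<noteq> \<epsilon>"
    if "0 < u" "u < t (Suc k) - t k" for u
    using nz[of "t k + u"] integral_phi[of k "t k + u"] that by simp
  ultimately show ?thesis
    using False integral_phi[of k "t (Suc k)"] by (simp add: triggered_step_def)
qed

lemma t_less: "t k < t (Suc k)"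
  using step_triggered[of k] by (simp add: triggered_step_def)

lemma t_nonneg: "0 \<le> t k"
proof (induction k)
  case (Suc k)
  then show ?case
    using t_less[of k] by simp
qed (simp add: t0)

lemma hessian_xd: "Hxx (x k) (t k) *v xd k = - (\<alpha> *\<^sub>R gx (x k) (t k) + gxt (x k) (t k))"
  using coercive_matrix_inv_cancel[OF m_pos strong[OF t_nonneg]]
    matrix_vector_mult_diff_distrib[of "Hxx (x k) (t k)" 0]
  by (simp add: xd_def)

lemma V_le_Phi:
  assumes "t k \<le> s"
  shows "V k s \<le> V k (t k) + Phi_choice cubic \<alpha> (a k) (b k) (V k (t k)) (s - t k)"
proof -
  have "path_grad_deriv (x k) (xd k) (t k) 0 = (- \<alpha>) *\<^sub>R gx (x k) (t k)"
    by (simp add: path_grad_deriv_def hessian_xd)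
  from path_energy_le[OF t_nonneg _ this, of "s - t k" cubic] show ?thesis
    using alpha_pos assms by (simp add: V_def path_grad_def a_def b_def second_order_bound_def)
qed

lemma V_le_max:
  assumes "t k \<le> s" "s \<le> t (Suc k)"
  shows "V k s \<le> max (V k (t k)) \<epsilon>"
  using V_le_Phi[OF assms(1)] triggered_step_le_max[OF step_triggered[of k] alpha_pos eps_pos, of "s - t k"] assms
  by simp

lemma V_next: "V (Suc k) (t (Suc k)) = V k (t (Suc k))"
  by (simp add: V_def x_next)

lemma V_start_le: "V k (t k) \<le> max (V 0 (t 0)) \<epsilon>"
proof (induction k)
  case (Suc k)
  then show ?case
    using V_le_max[of k "t (Suc k)"] t_less[of k] by (simp add: V_next)
qed simp

lemma norm_xd_le: "norm (xd k) \<le> (\<alpha> * sqrt (2 * max (V 0 (t 0)) \<epsilon>) + Cxt) / m"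
proof -
  have "norm (gx (x k) (t k)) = sqrt (2 * V k (t k))"
    by (simp add: V_def)
  also have "\<dots> \<le> sqrt (2 * max (V 0 (t 0)) \<epsilon>)"
    using V_start_le[of k] by simp
  finally have g: "norm (gx (x k) (t k)) \<le> sqrt (2 * max (V 0 (t 0)) \<epsilon>)" .
  have "m * norm (xd k) \<le> norm (Hxx (x k) (t k) *v xd k)"
    using coercive_norm_le[OF m_pos strong[OF t_nonneg]] .
  also have "\<dots> = norm (\<alpha> *\<^sub>R gx (x k) (t k) + gxt (x k) (t k))"
    by (simp only: hessian_xd norm_minus_cancel)
  also have "\<dots> \<le> \<alpha> * norm (gx (x k) (t k)) + norm (gxt (x k) (t k))"
    using norm_triangle_ineq[of "\<alpha> *\<^sub>R gx (x k) (t k)" "gxt (x k) (t k)"] alpha_pos by simp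
  also have "\<dots> \<le> \<alpha> * sqrt (2 * max (V 0 (t 0)) \<epsilon>) + Cxt"
    using g bnd_xt[OF t_nonneg] alpha_pos by (intro add_mono mult_left_mono) auto
  finally show ?thesis
    using m_pos by (simp add: le_divide_eq mult.commute)
qed

lemma trigger_slope_bounded: "\<exists>K>0. \<forall>k. trigger_slope \<alpha> (a k) (b k) (V k (t k)) \<le> K"
proof -
  define M where "M = max (V 0 (t 0)) \<epsilon>"
  define X where "X = (\<alpha> * sqrt (2 * M) + Cxt) / m"
  define A where "A = Cxx * X + Cxt"
  define B where "B = (Cxxx * real CARD('n) * X + 2 * Cxxt) * X + Cxtt"
  have X: "norm (xd k) \<le> X" for k
    using norm_xd_le by (simp add: X_def M_def)
  have nonneg: "0 \<le> X" "0 \<le> a k" "0 \<le> b k" "0 \<le> V k (t k)" for k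
    using order_trans[OF norm_ge_zero X] bound_constants_nonneg l1norm_nonneg[of "xd k"]
    by (simp_all add: a_def b_def V_def)
  have "a k \<le> A" for k
    using X bound_constants_nonneg by (simp add: a_def A_def mult_left_mono)
  moreover have "b k \<le> B" for k
  proof -
    have "l1norm (xd k) \<le> real CARD('n) * X"
      using order_trans[OF l1norm_le_card_norm mult_left_mono[OF X, of "real CARD('n)"]] by simp
    then have "Cxxx * l1norm (xd k) + 2 * Cxxt \<le> Cxxx * real CARD('n) * X + 2 * Cxxt"
      using bound_constants_nonneg by (simp add: mult.assoc mult_left_mono)
    then have "(Cxxx * l1norm (xd k) + 2 * Cxxt) * norm (xd k) \<le> (Cxxx * real CARD('n) * X + 2 * Cxxt) * X"
      by (rule mult_mono[OF _ X]) (use bound_constants_nonneg l1norm_nonneg[of "xd k"] nonneg(1) in auto)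
    then show ?thesis
      by (simp add: b_def B_def)
  qed
  moreover have "V k (t k) \<le> M" for k
    using V_start_le by (simp add: M_def)
  ultimately have "trigger_slope \<alpha> (a k) (b k) (V k (t k)) \<le> trigger_slope \<alpha> A B M" for k
    using nonneg alpha_pos by (intro trigger_slope_mono) auto
  moreover have "0 < trigger_slope \<alpha> A B M"
  proof -
    have "0 < A" "0 \<le> B" "0 \<le> M"
      using nonneg Cxt_pos bound_constants_nonneg eps_pos by (auto simp: A_def B_def M_def add_nonneg_pos)
    then have "0 < A^2" "0 \<le> A * B/2" "0 \<le> B * sqrt (2 * M)" "0 \<le> B^2/2"
      "0 \<le> 3/2 * \<alpha> * sqrt (2 * M) * B" "0 \<le> sqrt (2 * M) * B" "0 \<le> 2 * \<alpha>^2 * M"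
      using alpha_pos by auto
    then show ?thesis
      unfolding trigger_slope_def by linarith
  qed
  ultimately show ?thesis
    by blast
qed

lemma dwell_time: "\<exists>\<tau>>0. \<forall>k. t (Suc k) - t k > \<tau>"
proof -
  obtain K where K: "0 < K" "\<And>k. trigger_slope \<alpha> (a k) (b k) (V k (t k)) \<le> K"
    using trigger_slope_bounded by blast
  have lower: "dwell_bound \<alpha> \<epsilon> K \<le> t (Suc k) - t k" for k
    using triggered_step_dwell_time[OF step_triggered alpha_pos eps_pos _ _ _ K(2) K(1)]
      bound_constants_nonneg l1norm_nonneg[of "xd k"]
    by (simp add: a_def b_def V_def)
  have pos: "0 < dwell_bound \<alpha> \<epsilon> K"
    using dwell_bound_pos alpha_pos eps_pos K(1) by blast
  have "dwell_bound \<alpha> \<epsilon> K / 2 < t (Suc k) - t k" for k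
    using lower[of k] pos by linarith
  then show ?thesis
    using pos by (intro exI[of _ "dwell_bound \<alpha> \<epsilon> K / 2"]) auto
qed

lemma eventually_V_le_eps: "\<exists>m'. \<forall>k\<ge>m'. \<forall>s\<in>{t k..t (Suc k)}. V k s \<le> \<epsilon>"
proof -
  obtain K where K: "0 < K" "\<And>k. trigger_slope \<alpha> (a k) (b k) (V k (t k)) \<le> K"
    using trigger_slope_bounded by blast
  have "V (Suc k) (t (Suc k)) \<le> V k (t k) - \<alpha> * \<epsilon> * dwell_bound \<alpha> \<epsilon> K" if "\<epsilon> \<le> V k (t k)" for k
    using V_le_Phi[of k "t (Suc k)"] t_less[of k] bound_constants_nonneg l1norm_nonneg[of "xd k"]
      triggered_step_decrease[OF step_triggered that alpha_pos eps_pos _ _ K(2) K(1)]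
    by (simp add: V_next a_def b_def)
  moreover have "V (Suc k) (t (Suc k)) \<le> max (V k (t k)) \<epsilon>" for k
    using V_le_max[of k "t (Suc k)"] t_less[of k] by (simp add: V_next)
  moreover have "0 < \<alpha> * \<epsilon> * dwell_bound \<alpha> \<epsilon> K"
    using dwell_bound_pos alpha_pos eps_pos K(1) by simp
  moreover have "0 \<le> V k (t k)" for k
    by (simp add: V_def)
  ultimately obtain m' where m': "\<And>k. m' \<le> k \<Longrightarrow> V k (t k) \<le> \<epsilon>"
    using eventually_le_of_uniform_decrease[where W="\<lambda>k. V k (t k)"] by blast
  have "V k s \<le> \<epsilon>" if "m' \<le> k" "s \<in> {t k..t (Suc k)}" for k s
    using V_le_max[of k s] m'[OF that(1)] that(2) by simp
  then show ?thesis
    by blast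
qed

end

theorem theorem2:
  fixes f :: "real^'n \<Rightarrow> real \<Rightarrow> real"
    and gx gxt gxtt :: "real^'n \<Rightarrow> real \<Rightarrow> real^'n"
    and Hxx Hxxt :: "real^'n \<Rightarrow> real \<Rightarrow> real^'n^'n"
    and Hxxx :: "'n \<Rightarrow> real^'n \<Rightarrow> real \<Rightarrow> real^'n^'n"
    and m Cxx Cxt Cxxt Cxtt Cxxx \<alpha> \<epsilon> :: real
    and x0 :: "real^'n"
    and cubic :: bool
    and t :: "nat \<Rightarrow> real" and x xd :: "nat \<Rightarrow> real^'n"
    and a b :: "nat \<Rightarrow> real"
    and V phi :: "nat \<Rightarrow> real \<Rightarrow> real"
  assumes C3: "C3_on (\<lambda>z. f (fst z) (snd z)) (UNIV \<times> {0..})"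
    and grad: "\<And>y s. s \<ge> 0 \<Longrightarrow> ((\<lambda>z. f z s) has_derivative (\<lambda>h. gx y s \<bullet> h)) (at y)"
    and hess: "\<And>y s. s \<ge> 0 \<Longrightarrow> ((\<lambda>z. gx z s) has_derivative (\<lambda>h. Hxx y s *v h)) (at y)"
    and d_gxt: "\<And>y s. s \<ge> 0 \<Longrightarrow>
                  ((\<lambda>r. gx y r) has_vector_derivative gxt y s) (at s within {0..})"
    and d_Hxxt: "\<And>y s. s \<ge> 0 \<Longrightarrow>
                  ((\<lambda>r. Hxx y r) has_vector_derivative Hxxt y s) (at s within {0..})"
    and d_gxtt: "\<And>y s. s \<ge> 0 \<Longrightarrow>
                  ((\<lambda>r. gxt y r) has_vector_derivative gxtt y s) (at s within {0..})"
    and d_Hxxx: "\<And>y s i. s \<ge> 0 \<Longrightarrow>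
                  ((\<lambda>r. Hxx (y + r *\<^sub>R axis i 1) s) has_vector_derivative Hxxx i y s) (at 0)"
    and m_pos: "m > 0"
    and strong: "\<And>y s v. s \<ge> 0 \<Longrightarrow> v \<bullet> (Hxx y s *v v) \<ge> m * (v \<bullet> v)"
    and consts_pos: "Cxx > 0" "Cxt > 0" "Cxxt > 0" "Cxtt > 0" "Cxxx > 0"
    and bnd_xx: "\<And>y s. s \<ge> 0 \<Longrightarrow> onorm (\<lambda>v. Hxx y s *v v) \<le> Cxx"
    and bnd_xt: "\<And>y s. s \<ge> 0 \<Longrightarrow> norm (gxt y s) \<le> Cxt"
    and bnd_xxt: "\<And>y s. s \<ge> 0 \<Longrightarrow> onorm (\<lambda>v. Hxxt y s *v v) \<le> Cxxt"
    and bnd_xtt: "\<And>y s. s \<ge> 0 \<Longrightarrow> norm (gxtt y s) \<le> Cxtt"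
    and bnd_xxx: "\<And>y s i. s \<ge> 0 \<Longrightarrow> onorm (\<lambda>v. Hxxx i y s *v v) \<le> Cxxx"
    and alpha_pos: "\<alpha> > 0" and eps_pos: "\<epsilon> > 0"
    and t0: "t 0 = 0" and x_0: "x 0 = x0"
    and xd_def: "\<And>k. xd k = - (matrix_inv (Hxx (x k) (t k)) *v
                                  (\<alpha> *\<^sub>R gx (x k) (t k) + gxt (x k) (t k)))"
    and V_def: "\<And>k s. V k s = (norm (gx (x k + (s - t k) *\<^sub>R xd k) s))^2 / 2"
    and a_def: "\<And>k. a k = Cxx * norm (xd k) + Cxt"
    and b_def: "\<And>k. b k = (Cxxx * l1norm (xd k) + 2 * Cxxt) * norm (xd k) + Cxtt"
    and phi_def: "\<And>k s. phi k s = (if cubic then phi_cub \<alpha> (b k) (V k (t k)) (s - t k)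
                                   else phi_quad \<alpha> (a k) (b k) (V k (t k)) (s - t k))"
    and step_big: "\<And>k. V k (t k) \<ge> \<epsilon> \<Longrightarrow>
         t k < t (Suc k) \<and> phi k (t (Suc k)) = 0 \<and>
         (\<forall>s. t k < s \<and> s < t (Suc k) \<longrightarrow> phi k s \<noteq> 0)"
    and step_small: "\<And>k. V k (t k) < \<epsilon> \<Longrightarrow>
         t k < t (Suc k) \<and> V k (t k) + integral {t k..t (Suc k)} (phi k) = \<epsilon> \<and>
         (\<forall>s. t k < s \<and> s < t (Suc k) \<longrightarrow> V k (t k) + integral {t k..s} (phi k) \<noteq> \<epsilon>)"
    and x_next: "\<And>k. x (Suc k) = x k + (t (Suc k) - t k) *\<^sub>R xd k"
  shows "\<exists>m'::nat. (\<forall>k\<ge>m'. \<forall>s\<in>{t k..t (Suc k)}. V k s \<le> \<epsilon>) \<and>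
                   (\<exists>\<tau>>0. \<forall>k. t (Suc k) - t k > \<tau>)"
proof -
  interpret self_triggered gx gxt gxtt Hxx Hxxt Hxxx Cxx Cxt Cxxt Cxtt Cxxx m \<alpha> \<epsilon> cubic t x xd a b V phi
    by unfold_locales (fact assms)+
  show ?thesis
    using eventually_V_le_eps dwell_time by blast
qed

end
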